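(* Let $(B(t))_{t\ge 0}$ be a standard Brownian motion, let $S(t)=\max_{0\le s\le t}B(s)$, and let $\mathcal{A}=\int_0^1 S(t)\,dt$. Then \[ \mathbb{P}(\mathcal{A}>x)=\exp\{-3x^2/2+o(x^2)\},\qquad x\to\infty . \] *)

theory Defs
  imports "HOL-Probability.Probability" "HOL-Library.Landau_Symbols"
begin

definition std_brownian_motion :: "'a measure \<Rightarrow> (real \<Rightarrow> 'a \<Rightarrow> real) \<Rightarrow> bool" where
  "std_brownian_motion M B \<longleftrightarrow>
     prob_space M \<and>
     (\<forall>t\<ge>0. B t \<in> borel_measurable M) \<and>
     (\<forall>\<omega>\<in>space M. B 0 \<omega> = 0) \<and>
     (\<forall>\<omega>\<in>space M. continuous_on {0..} (\<lambda>t. B t \<omega>)) \<and>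
     (\<forall>s t. 0 \<le> s \<and> s < t \<longrightarrow>
        distributed M lborel (\<lambda>\<omega>. B t \<omega> - B s \<omega>)
          (\<lambda>x. ennreal (normal_density 0 (sqrt (t - s)) x))) \<and>
     (\<forall>(n::nat) (\<tau>::nat \<Rightarrow> real). 0 \<le> \<tau> 0 \<and> (\<forall>i<n. \<tau> i < \<tau> (Suc i)) \<longrightarrow>
        prob_space.indep_vars M (\<lambda>_. borel) (\<lambda>i \<omega>. B (\<tau> (Suc i)) \<omega> - B (\<tau> i) \<omega>) {..<n})"

definition running_max :: "(real \<Rightarrow> 'a \<Rightarrow> real) \<Rightarrow> real \<Rightarrow> 'a \<Rightarrow> real" where
  "running_max B t \<omega> = Sup ((\<lambda>s. B s \<omega>) ` {0..t})"

definition max_area :: "(real \<Rightarrow> 'a \<Rightarrow> real) \<Rightarrow> 'a \<Rightarrow> real" where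
  "max_area B \<omega> = integral {0..1} (\<lambda>t. running_max B t \<omega>)"

end

theory Submission
  imports Defs "HOL-Analysis.Equivalence_Measurable_On_Borel" "HOL-Real_Asymp.Real_Asymp"
begin

text \<open>Split [0,1] into n steps. As S is nondecreasing, A lies between the left and right
  Riemann sums of S. The left sum dominates the Riemann sum (1/n) \<Sum>k<n B(k/n) of B itself, a
  centred Gaussian with variance (\<Sum>m<n m^2) / n^3 \<longrightarrow> 1/3; this gives the lower bound.
  For the upper bound, discard the event that B rises by more than \<delta>x inside one of the n steps,
  whose probability is of order exp(-n \<delta>^2 x^2 / 128) by a dyadic chaining argument. Off this
  event S((k+1)/n) \<le> B(\<tau>(k)/n) + \<delta>x, where \<tau>(k) \<le> k is a grid point maximising B among
  the first k+1 grid points, and for each of the finitely many such index maps \<tau> the sum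
  (1/n) \<Sum>k<n B(\<tau>(k)/n) is a centred Gaussian of variance at most 1/3.\<close>

section \<open>Gaussian tails and quadratic exponential rates\<close>

lemma (in prob_space) normal_upper_tail_le:
  assumes X: "distributed M lborel X (\<lambda>x. ennreal (normal_density 0 \<sigma> x))"
    and \<sigma>: "0 < \<sigma>" and y: "0 \<le> y"
  shows "measure M {\<omega>\<in>space M. y < X \<omega>} \<le> exp (- y\<^sup>2 / (2 * \<sigma>\<^sup>2))"
proof -
  have set: "{\<omega>\<in>space M. y < X \<omega>} = X -` {y<..} \<inter> space M" by auto
  have "emeasure M {\<omega>\<in>space M. y < X \<omega>} =
      (\<integral>\<^sup>+x. ennreal (normal_density 0 \<sigma> x) * indicator {y<..} x \<partial>lborel)"
    unfolding set by (rule distributed_emeasure[OF X]) simp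
  also have "\<dots> \<le> (\<integral>\<^sup>+x. ennreal (exp (- y\<^sup>2 / (2 * \<sigma>\<^sup>2)) * normal_density y \<sigma> x) \<partial>lborel)"
  proof (rule nn_integral_mono)
    fix x
    show "ennreal (normal_density 0 \<sigma> x) * indicator {y<..} x
        \<le> ennreal (exp (- y\<^sup>2 / (2 * \<sigma>\<^sup>2)) * normal_density y \<sigma> x)"
    proof (cases "y < x")
      case True
      have "x\<^sup>2 \<ge> y\<^sup>2 + (x - y)\<^sup>2"
        using True y by (simp add: power2_eq_square algebra_simps mult_right_mono)
      then have "- x\<^sup>2 / (2 * \<sigma>\<^sup>2) \<le> - y\<^sup>2 / (2 * \<sigma>\<^sup>2) + - (x - y)\<^sup>2 / (2 * \<sigma>\<^sup>2)"
        using \<sigma> by (simp add: field_simps)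
      then have "exp (- x\<^sup>2 / (2 * \<sigma>\<^sup>2)) \<le> exp (- y\<^sup>2 / (2 * \<sigma>\<^sup>2)) * exp (- (x - y)\<^sup>2 / (2 * \<sigma>\<^sup>2))"
        by (simp add: exp_add[symmetric])
      then have "normal_density 0 \<sigma> x \<le> exp (- y\<^sup>2 / (2 * \<sigma>\<^sup>2)) * normal_density y \<sigma> x"
        unfolding normal_density_def using \<sigma>
        by (simp add: mult_left_mono mult.left_commute divide_right_mono)
      then show ?thesis using True by (simp add: ennreal_leI)
    qed simp
  qed
  also have "\<dots> = ennreal (exp (- y\<^sup>2 / (2 * \<sigma>\<^sup>2))) * (\<integral>\<^sup>+x. ennreal (normal_density y \<sigma> x) \<partial>lborel)"
    by (subst nn_integral_cmult[symmetric]) (auto simp: ennreal_mult)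
  also have "(\<integral>\<^sup>+x. ennreal (normal_density y \<sigma> x) \<partial>lborel) = 1"
    using \<sigma> by (subst nn_integral_eq_integral) auto
  finally show ?thesis by (simp add: emeasure_eq_measure)
qed

lemma (in prob_space) normal_upper_tail_ge:
  assumes X: "distributed M lborel X (\<lambda>x. ennreal (normal_density 0 \<sigma> x))"
    and \<sigma>: "0 < \<sigma>" and y: "0 \<le> y"
  shows "normal_density 0 \<sigma> (y + 1) \<le> measure M {\<omega>\<in>space M. y < X \<omega>}"
proof -
  have set: "{\<omega>\<in>space M. y < X \<omega>} = X -` {y<..} \<inter> space M" by auto
  have "ennreal (normal_density 0 \<sigma> (y + 1)) =
      (\<integral>\<^sup>+x. ennreal (normal_density 0 \<sigma> (y + 1)) * indicator {y<..y+1} x \<partial>lborel)"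
    by (simp add: nn_integral_cmult_indicator)
  also have "\<dots> \<le> (\<integral>\<^sup>+x. ennreal (normal_density 0 \<sigma> x) * indicator {y<..} x \<partial>lborel)"
  proof (rule nn_integral_mono)
    fix x
    show "ennreal (normal_density 0 \<sigma> (y + 1)) * indicator {y<..y+1} x
        \<le> ennreal (normal_density 0 \<sigma> x) * indicator {y<..} x"
    proof (cases "x \<in> {y<..y+1}")
      case True
      then have "x\<^sup>2 \<le> (y+1)\<^sup>2" using y by (intro power_mono) auto
      then have "normal_density 0 \<sigma> (y + 1) \<le> normal_density 0 \<sigma> x"
        unfolding normal_density_def using \<sigma> by (auto intro!: mult_left_mono divide_right_mono)
      then show ?thesis using True by (simp add: ennreal_leI)
    qed simp
  qed
  also have "\<dots> = emeasure M {\<omega>\<in>space M. y < X \<omega>}"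
    unfolding set by (rule distributed_emeasure[OF X, symmetric]) simp
  finally show ?thesis by (simp add: emeasure_eq_measure)
qed

lemma (in prob_space) normal_abs_tail_le:
  assumes X: "distributed M lborel X (\<lambda>x. ennreal (normal_density 0 \<sigma> x))"
    and \<sigma>: "0 < \<sigma>" and y: "0 \<le> y"
  shows "measure M {\<omega>\<in>space M. y < \<bar>X \<omega>\<bar>} \<le> 2 * exp (- y\<^sup>2 / (2 * \<sigma>\<^sup>2))"
proof -
  have "distributed M lborel (\<lambda>x. 0 + -1 * X x)
      (\<lambda>x. ennreal (normal_density (0 + -1 * 0) (\<bar>-1\<bar> * \<sigma>) x))"
    by (rule normal_density_affine[OF X \<sigma>]) simp
  then have X': "distributed M lborel (\<lambda>x. - X x) (\<lambda>x. ennreal (normal_density 0 \<sigma> x))" by simp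
  have "X \<in> borel_measurable M" using X by (auto dest: distributed_measurable)
  then have sets: "{\<omega>\<in>space M. y < X \<omega>} \<in> sets M" "{\<omega>\<in>space M. y < - X \<omega>} \<in> sets M"
    unfolding borel_measurable_iff_greater by (blast, metis borel_measurable_uminus
      borel_measurable_iff_greater)
  have "{\<omega>\<in>space M. y < \<bar>X \<omega>\<bar>} = {\<omega>\<in>space M. y < X \<omega>} \<union> {\<omega>\<in>space M. y < - X \<omega>}" by auto
  then have "measure M {\<omega>\<in>space M. y < \<bar>X \<omega>\<bar>}
      \<le> measure M {\<omega>\<in>space M. y < X \<omega>} + measure M {\<omega>\<in>space M. y < - X \<omega>}"
    using measure_Un_le[OF sets] by simp
  also have "\<dots> \<le> exp (- y\<^sup>2 / (2 * \<sigma>\<^sup>2)) + exp (- y\<^sup>2 / (2 * \<sigma>\<^sup>2))"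
    by (intro add_mono normal_upper_tail_le[OF X \<sigma> y] normal_upper_tail_le[OF X' \<sigma> y])
  finally show ?thesis by simp
qed

lemma eventually_le_quadratic:
  fixes a b c :: real
  assumes "0 < c"
  shows "\<forall>\<^sub>F x in at_top. a * x + b \<le> c * x\<^sup>2"
  using assms by real_asymp

lemma eventually_mult_exp_le_exp:
  fixes a b K :: real
  assumes "a < b"
  shows "\<forall>\<^sub>F x in at_top. K * exp (- b * x\<^sup>2) \<le> exp (- a * x\<^sup>2)"
proof (cases "0 < K")
  case True
  have "0 < b - a" using assms by simp
  from eventually_le_quadratic[OF this, of 0 "ln K"]
  show ?thesis
  proof eventually_elim
    case (elim x)
    have "K * exp (- b * x\<^sup>2) = exp (ln K - b * x\<^sup>2)"
      using True by (simp add: exp_diff exp_minus field_simps)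
    also have "\<dots> \<le> exp (- a * x\<^sup>2)" using elim by (simp add: algebra_simps)
    finally show ?case .
  qed
next
  case False
  then show ?thesis
    by (intro always_eventually allI order.trans[OF _ less_imp_le[OF exp_gt_zero]])
      (simp add: mult_nonpos_nonneg)
qed

lemma normal_density_ge_exp:
  assumes v: "0 < v" and c: "0 < c"
  shows "\<forall>\<^sub>F x in at_top. exp (- (1 / (2 * v) + c) * x\<^sup>2) \<le> normal_density 0 (sqrt v) (x + 1)"
proof -
  define C where "C = ln (1 / sqrt (2 * pi * v))"
  have "exp C = 1 / sqrt (2 * pi * v)" unfolding C_def using v by simp
  then have density: "normal_density 0 (sqrt v) (x + 1) = exp (C + - (x + 1)\<^sup>2 / (2 * v))" for x
    unfolding normal_density_def exp_add using v by simp
  from eventually_le_quadratic[OF c, of "1 / v" "1 / (2 * v) - C"]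
  show ?thesis
  proof eventually_elim
    case (elim x)
    have "(x + 1)\<^sup>2 / (2 * v) = x\<^sup>2 / (2 * v) + (1 / v * x + 1 / (2 * v))"
      using v by (simp add: field_simps power2_eq_square)
    moreover have "- (1 / (2 * v) + c) * x\<^sup>2 = - (x\<^sup>2 / (2 * v)) - c * x\<^sup>2"
      by (simp add: algebra_simps)
    ultimately have "- (1 / (2 * v) + c) * x\<^sup>2 \<le> C + - (x + 1)\<^sup>2 / (2 * v)"
      using elim by simp
    then show ?case unfolding density by simp
  qed
qed

lemma exp_neg_quadratic_rate:
  fixes p :: "real \<Rightarrow> real" and c :: real
  assumes lower: "\<And>\<epsilon>. 0 < \<epsilon> \<Longrightarrow> \<forall>\<^sub>F x in at_top. exp (- (c + \<epsilon>) * x\<^sup>2) \<le> p x"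
    and upper: "\<And>\<epsilon>. 0 < \<epsilon> \<Longrightarrow> \<forall>\<^sub>F x in at_top. p x \<le> exp (- (c - \<epsilon>) * x\<^sup>2)"
  shows "\<exists>g. g \<in> o[at_top](\<lambda>x. x ^ 2) \<and> (\<forall>\<^sub>F x in at_top. p x = exp (- c * x ^ 2 + g x))"
proof -
  define g where "g x = ln (p x) + c * x ^ 2" for x
  have pos: "\<forall>\<^sub>F x in at_top. 0 < p x"
    using lower[OF zero_less_one] by eventually_elim (auto intro: less_le_trans[OF exp_gt_zero])
  have "g \<in> o[at_top](\<lambda>x. x ^ 2)"
  proof (rule landau_o.smallI)
    fix \<epsilon> :: real assume \<epsilon>: "0 < \<epsilon>"
    from lower[OF \<epsilon>] upper[OF \<epsilon>] pos show "\<forall>\<^sub>F x in at_top. norm (g x) \<le> \<epsilon> * norm (x ^ 2)"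
    proof eventually_elim
      case (elim x)
      have "ln (exp (- (c + \<epsilon>) * x\<^sup>2)) \<le> ln (p x)" and "ln (p x) \<le> ln (exp (- (c - \<epsilon>) * x\<^sup>2))"
        using elim by (subst ln_le_cancel_iff; simp)+
      then show ?case unfolding g_def by (simp add: algebra_simps abs_le_iff)
    qed
  qed
  moreover have "\<forall>\<^sub>F x in at_top. p x = exp (- c * x ^ 2 + g x)"
    using pos by eventually_elim (simp add: g_def)
  ultimately show ?thesis by blast
qed

section \<open>Riemann sums and dyadic chaining\<close>

lemma continuous_on_dyadic_point_gt:
  fixes f :: "real \<Rightarrow> real"
  assumes cont: "continuous_on {a..a+h} f" and h: "0 < h"
    and s: "s \<in> {a..a+h}" and z: "z < f s"
  shows "\<exists>m j. j \<le> (2::nat)^m \<and> z < f (a + h * real j / 2^m)"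
proof -
  have "continuous (at s within {a..a+h}) f"
    using cont s by (simp add: continuous_on_eq_continuous_within)
  then obtain d where d: "d > 0"
    "\<And>s'. s' \<in> {a..a+h} \<Longrightarrow> dist s' s < d \<Longrightarrow> dist (f s') (f s) < f s - z"
    using z unfolding continuous_within_eps_delta by (metis diff_gt_0_iff_gt)
  obtain m :: nat where m: "h / d < 2 ^ m"
    using real_arch_pow[of 2 "h / d"] by auto
  define q where "q = (2::real) ^ m"
  have q0: "0 < q" unfolding q_def by simp
  have hm: "h / q < d" using m d h q0 unfolding q_def[symmetric] by (simp add: field_simps)
  define j where "j = nat \<lfloor>(s - a) * q / h\<rfloor>"
  have fl0: "0 \<le> \<lfloor>(s - a) * q / h\<rfloor>" using s h q0 by auto
  have j1: "real j \<le> (s - a) * q / h" unfolding j_def using fl0 by simp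
  have j2: "(s - a) * q / h < real j + 1" unfolding j_def using fl0 by linarith
  have "(s - a) / h \<le> 1" using s h by (simp add: field_simps)
  then have "(s - a) / h * q \<le> q" using s h q0 by (intro mult_left_le_one_le) auto
  then have "real j \<le> q" using j1 by simp
  then have jle: "j \<le> 2^m" unfolding q_def
    by (metis of_nat_le_iff of_nat_numeral of_nat_power)
  define t where "t = a + h * real j / q"
  have t1: "t \<le> s" using j1 h q0 unfolding t_def by (simp add: field_simps)
  have e: "(s - a) * q < (real j + 1) * h" using j2 h by (simp add: pos_divide_less_eq)
  have "s - t = ((s - a) * q - h * real j) / q" unfolding t_def using q0 by (simp add: field_simps)
  also have "\<dots> < h / q" using e q0 by (intro divide_strict_right_mono) (auto simp: algebra_simps)
  finally have t2: "s - t < h / q" .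
  have "t \<in> {a..a+h}" using t1 s h q0 unfolding t_def by auto
  moreover have "dist t s < d" using t1 t2 hm by (simp add: dist_real_def)
  ultimately have "dist (f t) (f s) < f s - z" using d by blast
  then have "z < f t" by (simp add: dist_real_def)
  then show ?thesis using jle unfolding t_def q_def by blast
qed

lemma integral_uniform_partition:
  fixes f :: "real \<Rightarrow> real"
  assumes f: "f integrable_on {0..1}" and n: "0 < n" and k: "k \<le> n"
  shows "integral {0..real k / real n} f
           = (\<Sum>i<k. integral {real i / real n..real (Suc i) / real n} f)"
  using k
proof (induction k)
  case (Suc k)
  have "f integrable_on {0..real (Suc k) / real n}"
    by (rule integrable_on_subinterval[OF f]) (use Suc.prems n in auto)
  then have "integral {0..real (Suc k) / real n} f
      = integral {0..real k / real n} f + integral {real k / real n..real (Suc k) / real n} f"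
    by (intro Henstock_Kurzweil_Integration.integral_combine[symmetric])
      (use n in \<open>auto simp: divide_right_mono\<close>)
  then show ?case using Suc by simp
qed simp

lemma mono_on_integral_Riemann_bounds:
  fixes f :: "real \<Rightarrow> real"
  assumes mono: "mono_on {0..1} f" and n: "0 < n"
  shows "(\<Sum>i<n. f (real i / real n)) / real n \<le> integral {0..1} f"
    and "integral {0..1} f \<le> (\<Sum>i<n. f (real (Suc i) / real n)) / real n"
proof -
  have f: "f integrable_on {0..1}" by (rule integrable_on_mono_on[OF mono])
  have split: "integral {0..1} f = (\<Sum>i<n. integral {real i / real n..real (Suc i) / real n} f)"
    using integral_uniform_partition[OF f n order.refl] n by simp
  have piece: "f (real i / real n) / real n \<le> integral {real i / real n..real (Suc i) / real n} f \<and>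
      integral {real i / real n..real (Suc i) / real n} f \<le> f (real (Suc i) / real n) / real n"
    if i: "i < n" for i
  proof -
    let ?a = "real i / real n" and ?b = "real (Suc i) / real n"
    have ab: "?a \<le> ?b" using n by (simp add: divide_right_mono)
    have sub: "{?a..?b} \<subseteq> {0..1}" using i n by (auto simp: field_simps)
    have fi: "f integrable_on {?a..?b}" by (rule integrable_on_subinterval[OF f sub])
    have lo: "f ?a \<le> f t" and hi: "f t \<le> f ?b" if "t \<in> {?a..?b}" for t
      using that sub ab order.trans[of 0 ?a t] by (auto intro!: mono_onD[OF mono])
    have len: "?b - ?a = 1 / real n" by (simp add: add_divide_distrib)
    have "integral {?a..?b} (\<lambda>t. f ?a) \<le> integral {?a..?b} f"
      by (rule integral_le[OF integrable_const_ivl fi lo])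
    moreover have "integral {?a..?b} f \<le> integral {?a..?b} (\<lambda>t. f ?b)"
      by (rule integral_le[OF fi integrable_const_ivl hi])
    ultimately show ?thesis using ab len by simp
  qed
  show "(\<Sum>i<n. f (real i / real n)) / real n \<le> integral {0..1} f"
    unfolding split sum_divide_distrib by (rule sum_mono) (use piece in auto)
  show "integral {0..1} f \<le> (\<Sum>i<n. f (real (Suc i) / real n)) / real n"
    unfolding split sum_divide_distrib by (rule sum_mono) (use piece in auto)
qed

text \<open>Every dyadic point of level m in [a, a+h] is reached from a by at most one step of each
  level l \<le> m.\<close>

lemma dyadic_chaining_le:
  fixes f :: "real \<Rightarrow> real" and w :: "nat \<Rightarrow> real"
  assumes "\<And>l j. l \<le> m \<Longrightarrow> j < 2^l \<Longrightarrow>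
             \<bar>f (a + h * real (Suc j) / 2^l) - f (a + h * real j / 2^l)\<bar> \<le> w l"
    and "\<And>l. 0 \<le> w l" and "j \<le> 2^m"
  shows "f (a + h * real j / 2^m) - f a \<le> (\<Sum>l\<le>m. w l)"
  using assms
proof (induction m arbitrary: j)
  case 0
  then have "j = 0 \<or> j = 1" by auto
  then show ?case using "0.prems"(1)[of 0 0] "0.prems"(2)[of 0] by auto
next
  case (Suc m)
  have IH: "f (a + h * real k / 2^m) - f a \<le> (\<Sum>l\<le>m. w l)" if "k \<le> 2^m" for k
    using Suc.prems(1,2) that by (intro Suc.IH) auto
  have half: "a + h * real (2 * k) / 2^(Suc m) = a + h * real k / 2^m" for k
    by (simp add: field_simps)
  show ?case
  proof (cases "even j")
    case True
    then obtain k where k: "j = 2 * k" by blast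
    then have "f (a + h * real j / 2^(Suc m)) - f a \<le> (\<Sum>l\<le>m. w l)"
      using IH[of k] half Suc.prems(3) by simp
    then show ?thesis using Suc.prems(2)[of "Suc m"] by simp
  next
    case False
    then obtain k where k: "j = Suc (2 * k)" by (metis oddE Suc_eq_plus1)
    then have kl: "k < 2^m" using Suc.prems(3) by simp
    have "\<bar>f (a + h * real (Suc (2*k)) / 2^(Suc m)) - f (a + h * real (2*k) / 2^(Suc m))\<bar>
        \<le> w (Suc m)"
      using kl by (intro Suc.prems(1)) auto
    moreover have "f (a + h * real (2 * k) / 2^(Suc m)) - f a \<le> (\<Sum>l\<le>m. w l)"
      using IH[of k] kl half by simp
    ultimately show ?thesis using k by simp
  qed
qed

lemma sum_lessThan_square: "(\<Sum>m<n. real m ^ 2) = (2 * real n ^ 3 - 3 * real n ^ 2 + real n) / 6"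
  by (induction n) (simp_all add: power2_eq_square power3_eq_cube algebra_simps add_divide_distrib)

lemma sum_lessThan_square_le: "(\<Sum>m<n. real m ^ 2) \<le> real n ^ 3 / 3"
proof -
  have "real n \<le> 3 * real n ^ 2" by (cases n) (auto simp: power2_eq_square)
  then show ?thesis unfolding sum_lessThan_square by simp
qed

lemma sum_lessThan_square_over_cube_tendsto:
  "(\<lambda>n. (\<Sum>m<n. real m ^ 2) / real n ^ 3) \<longlonglongrightarrow> 1 / 3"
  unfolding sum_lessThan_square by real_asymp

lemma card_lessThan_greater: "card {k \<in> {..<n}. i < k} = n - Suc i"
proof -
  have "{k \<in> {..<n}. i < k} = {Suc i..<n}" by auto
  then show ?thesis by simp
qed

text \<open>grid_weight n \<tau> i is the weight of the i-th grid increment of B in the Riemann sum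
  (1/n) \<Sum>k<n B(\<tau>(k)/n): it is counted once for every k with i < \<tau>(k).\<close>

definition grid_weight :: "nat \<Rightarrow> (nat \<Rightarrow> nat) \<Rightarrow> nat \<Rightarrow> real" where
  "grid_weight n \<tau> i = real (card {k \<in> {..<n}. i < \<tau> k}) / real n"

lemma grid_weight_variance_le:
  assumes n: "0 < n" and \<tau>: "\<And>k. k < n \<Longrightarrow> \<tau> k \<le> k"
  shows "(\<Sum>i<n. (grid_weight n \<tau> i)\<^sup>2 / real n) \<le> 1 / 3"
proof -
  have weight: "grid_weight n \<tau> i \<le> real (n - Suc i) / real n" for i
  proof -
    have "{k \<in> {..<n}. i < \<tau> k} \<subseteq> {k \<in> {..<n}. i < k}"
      using \<tau> by (auto simp: less_le_trans)
    then have "card {k \<in> {..<n}. i < \<tau> k} \<le> card {k \<in> {..<n}. i < k}" by (intro card_mono) auto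
    then show ?thesis
      unfolding grid_weight_def card_lessThan_greater using n by (simp add: divide_right_mono)
  qed
  have "(\<Sum>i<n. (grid_weight n \<tau> i)\<^sup>2 / real n) \<le> (\<Sum>i<n. (real (n - Suc i) / real n)\<^sup>2 / real n)"
    by (intro sum_mono divide_right_mono power_mono weight) (auto simp: grid_weight_def)
  also have "\<dots> = (\<Sum>i<n. (\<lambda>m. real m ^ 2 / real n ^ 3) (n - Suc i))"
    by (intro sum.cong refl) (simp add: power2_eq_square power3_eq_cube)
  also have "\<dots> = (\<Sum>m<n. real m ^ 2 / real n ^ 3)" by (rule sum.nat_diff_reindex)
  also have "\<dots> \<le> 1 / 3"
    using n sum_lessThan_square_le[of n] by (simp add: divide_le_eq flip: sum_divide_distrib)
  finally show ?thesis .
qed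

lemma grid_weight_id_variance:
  "(\<Sum>i<n. (grid_weight n id i)\<^sup>2 / real n) = (\<Sum>m<n. real m ^ 2) / real n ^ 3"
proof -
  have "(\<Sum>i<n. (grid_weight n id i)\<^sup>2 / real n) = (\<Sum>i<n. (\<lambda>m. real m ^ 2 / real n ^ 3) (n - Suc i))"
    unfolding grid_weight_def id_def card_lessThan_greater
    by (intro sum.cong refl) (simp add: power2_eq_square power3_eq_cube)
  also have "\<dots> = (\<Sum>m<n. real m ^ 2 / real n ^ 3)" by (rule sum.nat_diff_reindex)
  finally show ?thesis by (simp add: sum_divide_distrib)
qed

section \<open>Brownian motion and its running maximum\<close>

locale brownian_motion =
  fixes M :: "'a measure" and B :: "real \<Rightarrow> 'a \<Rightarrow> real"
  assumes std_brownian_motion: "std_brownian_motion M B"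

sublocale brownian_motion \<subseteq> prob_space M
  using std_brownian_motion unfolding std_brownian_motion_def by auto

context brownian_motion
begin

lemma B_measurable: "0 \<le> t \<Longrightarrow> B t \<in> borel_measurable M"
  and B_zero: "\<omega> \<in> space M \<Longrightarrow> B 0 \<omega> = 0"
  and B_continuous: "\<omega> \<in> space M \<Longrightarrow> continuous_on {0..} (\<lambda>t. B t \<omega>)"
  and B_increment_normal: "0 \<le> s \<Longrightarrow> s < t \<Longrightarrow>
    distributed M lborel (\<lambda>\<omega>. B t \<omega> - B s \<omega>) (\<lambda>x. ennreal (normal_density 0 (sqrt (t - s)) x))"
  and B_increments_indep: "0 \<le> \<tau> 0 \<Longrightarrow> (\<forall>i<n. \<tau> i < \<tau> (Suc i)) \<Longrightarrow>
    indep_vars (\<lambda>_. borel) (\<lambda>i \<omega>. B (\<tau> (Suc i)) \<omega> - B (\<tau> i) \<omega>) {..<n}"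
  using std_brownian_motion unfolding std_brownian_motion_def by auto

lemma B_continuous_on: "\<omega> \<in> space M \<Longrightarrow> 0 \<le> a \<Longrightarrow> continuous_on {a..b} (\<lambda>t. B t \<omega>)"
  by (rule continuous_on_subset[OF B_continuous]) auto

lemma bdd_above_B: "\<omega> \<in> space M \<Longrightarrow> 0 \<le> a \<Longrightarrow> bdd_above ((\<lambda>s. B s \<omega>) ` {a..b})"
  by (intro bounded_imp_bdd_above compact_imp_bounded compact_continuous_image B_continuous_on) auto

lemma running_max_ge: "\<omega> \<in> space M \<Longrightarrow> 0 \<le> s \<Longrightarrow> s \<le> t \<Longrightarrow> B s \<omega> \<le> running_max B t \<omega>"
  unfolding running_max_def by (rule cSup_upper) (auto intro: bdd_above_B)

lemma running_max_le:
  "0 \<le> t \<Longrightarrow> (\<And>s. 0 \<le> s \<Longrightarrow> s \<le> t \<Longrightarrow> B s \<omega> \<le> c) \<Longrightarrow> running_max B t \<omega> \<le> c"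
  unfolding running_max_def by (rule cSup_least) auto

lemma less_running_max_iff:
  "\<omega> \<in> space M \<Longrightarrow> 0 \<le> t \<Longrightarrow> c < running_max B t \<omega> \<longleftrightarrow> (\<exists>s\<in>{0..t}. c < B s \<omega>)"
  unfolding running_max_def by (subst less_cSup_iff) (auto intro: bdd_above_B)

lemma running_max_mono:
  "\<omega> \<in> space M \<Longrightarrow> 0 \<le> t \<Longrightarrow> t \<le> t' \<Longrightarrow> running_max B t \<omega> \<le> running_max B t' \<omega>"
  unfolding running_max_def by (rule cSup_subset_mono) (auto intro: bdd_above_B)

text \<open>By continuity the supremum may be taken over the countably many dyadic times.\<close>

lemma running_max_measurable:
  assumes t: "0 \<le> t"
  shows "running_max B t \<in> borel_measurable M"
proof (cases "t = 0")
  case True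
  then have "running_max B t = B 0" by (simp add: running_max_def fun_eq_iff)
  then show ?thesis using B_measurable[of 0] by simp
next
  case False
  with t have t0: "0 < t" by simp
  let ?d = "\<lambda>m j. t * real j / 2 ^ m"
  show ?thesis unfolding borel_measurable_iff_greater
  proof
    fix c
    have "\<exists>m j. j \<le> (2::nat)^m \<and> c < B (?d m j) \<omega>"
      if \<omega>: "\<omega> \<in> space M" and lt: "c < running_max B t \<omega>" for \<omega>
    proof -
      obtain s where s: "s \<in> {0..t}" "c < B s \<omega>"
        using less_running_max_iff[OF \<omega> t] lt by blast
      have "\<exists>m j. j \<le> (2::nat)^m \<and> c < (\<lambda>s. B s \<omega>) (0 + t * real j / 2^m)"
        by (rule continuous_on_dyadic_point_gt[of 0 t]) (use B_continuous_on[OF \<omega>] t0 s in auto)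
      then show ?thesis by simp
    qed
    moreover have "c < running_max B t \<omega>"
      if \<omega>: "\<omega> \<in> space M" and j: "j \<le> (2::nat)^m" and c: "c < B (?d m j) \<omega>" for \<omega> m j
    proof -
      have "t * (real j / 2^m) \<le> t * 1" using j t by (intro mult_left_mono) (auto simp: field_simps)
      then show ?thesis using less_running_max_iff[OF \<omega> t] c t0 by force
    qed
    ultimately have "{\<omega> \<in> space M. c < running_max B t \<omega>} =
        (\<Union>m. \<Union>j\<in>{..(2::nat)^m}. {\<omega> \<in> space M. c < B (?d m j) \<omega>})"
      by (auto simp: atMost_iff) (metis atMost_iff)
    moreover have "{\<omega> \<in> space M. c < B (?d m j) \<omega>} \<in> sets M" for m j :: nat
      using B_measurable[of "?d m j"] t by (simp add: borel_measurable_iff_greater)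
    ultimately show "{\<omega> \<in> space M. c < running_max B t \<omega>} \<in> sets M" by auto
  qed
qed

lemma max_area_Riemann_bounds:
  assumes \<omega>: "\<omega> \<in> space M" and n: "0 < n"
  shows "(\<Sum>i<n. running_max B (real i / real n) \<omega>) / real n \<le> max_area B \<omega>"
    and "max_area B \<omega> \<le> (\<Sum>i<n. running_max B (real (Suc i) / real n) \<omega>) / real n"
proof -
  have mono: "mono_on {0..1} (\<lambda>t. running_max B t \<omega>)"
    by (rule mono_onI) (use running_max_mono[OF \<omega>] in auto)
  show "(\<Sum>i<n. running_max B (real i / real n) \<omega>) / real n \<le> max_area B \<omega>"
    unfolding max_area_def by (rule mono_on_integral_Riemann_bounds(1)[OF mono n])
  show "max_area B \<omega> \<le> (\<Sum>i<n. running_max B (real (Suc i) / real n) \<omega>) / real n"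
    unfolding max_area_def by (rule mono_on_integral_Riemann_bounds(2)[OF mono n])
qed

text \<open>The right Riemann sums converge to the area: they exceed the left ones by (S 1 - S 0)/n.\<close>

lemma max_area_measurable: "max_area B \<in> borel_measurable M"
proof (rule borel_measurable_LIMSEQ_real)
  let ?U = "\<lambda>n \<omega>. (\<Sum>i<Suc n. running_max B (real (Suc i) / real (Suc n)) \<omega>) / real (Suc n)"
  show "?U n \<in> borel_measurable M" for n
    by (intro borel_measurable_divide borel_measurable_sum running_max_measurable) auto
  fix \<omega> assume \<omega>: "\<omega> \<in> space M"
  let ?S = "\<lambda>t. running_max B t \<omega>"
  have gap: "?U n \<omega> - max_area B \<omega> \<le> (?S 1 - ?S 0) / real (Suc n)" for n
  proof -
    have "?U n \<omega> - max_area B \<omega>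
        \<le> ?U n \<omega> - (\<Sum>i<Suc n. ?S (real i / real (Suc n))) / real (Suc n)"
      using max_area_Riemann_bounds(1)[OF \<omega>, of "Suc n"] by simp
    also have "\<dots> = (\<Sum>i<Suc n. ?S (real (Suc i) / real (Suc n)) - ?S (real i / real (Suc n)))
        / real (Suc n)"
      by (simp add: sum_subtractf diff_divide_distrib)
    also have "\<dots> = (?S 1 - ?S 0) / real (Suc n)"
      by (subst sum_lessThan_telescope[where f = "\<lambda>i. ?S (real i / real (Suc n))"]) simp
    finally show ?thesis .
  qed
  have above: "0 \<le> ?U n \<omega> - max_area B \<omega>" for n
    using max_area_Riemann_bounds(2)[OF \<omega>, of "Suc n"] by simp
  have "(\<lambda>n. (?S 1 - ?S 0) / real (Suc n)) \<longlonglongrightarrow> 0"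
    by (intro tendsto_divide_0[OF tendsto_const] filterlim_real_sequentially
        filterlim_compose[OF _ filterlim_Suc] filterlim_at_top_imp_at_infinity)
  then have "(\<lambda>n. ?U n \<omega> - max_area B \<omega>) \<longlonglongrightarrow> 0"
    by (rule tendsto_sandwich[rotated 2, OF tendsto_const])
      (use gap above in auto)
  then show "(\<lambda>n. ?U n \<omega>) \<longlonglongrightarrow> max_area B \<omega>"
    by (simp add: LIM_zero_iff)
qed

section \<open>Gaussian combinations of grid increments\<close>

definition grid_incr :: "nat \<Rightarrow> nat \<Rightarrow> 'a \<Rightarrow> real" where
  "grid_incr n i \<omega> = B (real (Suc i) / real n) \<omega> - B (real i / real n) \<omega>"

lemma grid_incr_measurable: "grid_incr n i \<in> borel_measurable M"
  unfolding grid_incr_def[abs_def] by (intro borel_measurable_diff B_measurable) auto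

lemma grid_incr_indep: "0 < n \<Longrightarrow> indep_vars (\<lambda>_. borel) (grid_incr n) {..<k}"
  using B_increments_indep[of "\<lambda>i. real i / real n"]
  by (simp add: grid_incr_def[abs_def] divide_strict_right_mono)

lemma grid_incr_normal:
  assumes "0 < n"
  shows "distributed M lborel (grid_incr n i) (\<lambda>x. ennreal (normal_density 0 (sqrt (1 / real n)) x))"
proof -
  have "real (Suc i) / real n - real i / real n = 1 / real n" by (simp add: add_divide_distrib)
  then show ?thesis
    using B_increment_normal[of "real i / real n" "real (Suc i) / real n"] assms
    by (simp add: grid_incr_def[abs_def] divide_strict_right_mono)
qed

lemma B_grid_eq_sum: "\<omega> \<in> space M \<Longrightarrow> B (real m / real n) \<omega> = (\<Sum>i<m. grid_incr n i \<omega>)"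
  by (induction m) (auto simp: B_zero grid_incr_def)

lemma grid_combination_normal:
  assumes n: "0 < n" and nz: "\<exists>i<n. c i \<noteq> 0"
  shows "distributed M lborel (\<lambda>\<omega>. \<Sum>i<n. c i * grid_incr n i \<omega>)
           (\<lambda>x. ennreal (normal_density 0 (sqrt (\<Sum>i<n. (c i)\<^sup>2 / real n)) x))"
proof -
  define I where "I = {i. i < n \<and> c i \<noteq> 0}"
  have I: "finite I" "I \<noteq> {}" "I \<subseteq> {..<n}" using nz unfolding I_def by auto
  have indep: "indep_vars (\<lambda>_. borel) (\<lambda>i \<omega>. c i * grid_incr n i \<omega>) I"
    by (rule indep_vars_compose2[where Y = "\<lambda>i x. c i * x",
          OF indep_vars_subset[OF grid_incr_indep[OF n] I(3)]]) auto
  have normal: "distributed M lborel (\<lambda>\<omega>. c i * grid_incr n i \<omega>)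
      (\<lambda>x. ennreal (normal_density 0 (\<bar>c i\<bar> * sqrt (1 / real n)) x))" if "i \<in> I" for i
    using normal_density_affine[OF grid_incr_normal[OF n, of i], of "c i" 0] n that
    by (simp add: I_def)
  have pos: "0 < \<bar>c i\<bar> * sqrt (1 / real n)" if "i \<in> I" for i using that n unfolding I_def by auto
  have "(\<Sum>i\<in>I. c i * grid_incr n i \<omega>) = (\<Sum>i<n. c i * grid_incr n i \<omega>)" for \<omega>
    by (rule sum.mono_neutral_left) (use I in \<open>auto simp: I_def\<close>)
  moreover have "(\<Sum>i\<in>I. (\<bar>c i\<bar> * sqrt (1 / real n))\<^sup>2) = (\<Sum>i<n. (c i)\<^sup>2 / real n)"
  proof -
    have "(\<Sum>i\<in>I. (\<bar>c i\<bar> * sqrt (1 / real n))\<^sup>2) = (\<Sum>i\<in>I. (c i)\<^sup>2 / real n)"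
      using n by (intro sum.cong) (auto simp: power_mult_distrib)
    also have "\<dots> = (\<Sum>i<n. (c i)\<^sup>2 / real n)"
      by (rule sum.mono_neutral_left) (use I in \<open>auto simp: I_def\<close>)
    finally show ?thesis .
  qed
  ultimately show ?thesis using sum_indep_normal[OF I(1,2) indep pos normal] by simp
qed

lemma grid_combination_variance_pos:
  "0 < n \<Longrightarrow> i < n \<Longrightarrow> c i \<noteq> 0 \<Longrightarrow> 0 < (\<Sum>i<n. (c i)\<^sup>2 / real n)"
  by (rule sum_pos2[of _ i]) auto

lemma grid_combination_tail_le:
  assumes n: "0 < n" and y: "0 \<le> y" and var: "(\<Sum>i<n. (c i)\<^sup>2 / real n) \<le> V"
  shows "measure M {\<omega> \<in> space M. y < (\<Sum>i<n. c i * grid_incr n i \<omega>)} \<le> exp (- y\<^sup>2 / (2 * V))"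
proof (cases "\<exists>i<n. c i \<noteq> 0")
  case False
  then have "{\<omega> \<in> space M. y < (\<Sum>i<n. c i * grid_incr n i \<omega>)} = {}" using y by auto
  then show ?thesis by (simp only: measure_empty exp_ge_zero)
next
  case True
  let ?v = "\<Sum>i<n. (c i)\<^sup>2 / real n"
  have v: "0 < ?v" using True grid_combination_variance_pos[OF n] by blast
  have "measure M {\<omega> \<in> space M. y < (\<Sum>i<n. c i * grid_incr n i \<omega>)} \<le> exp (- y\<^sup>2 / (2 * (sqrt ?v)\<^sup>2))"
    using v by (intro normal_upper_tail_le[OF grid_combination_normal[OF n True] _ y]) auto
  also have "\<dots> \<le> exp (- y\<^sup>2 / (2 * V))"
    using v var by (simp add: frac_le)
  finally show ?thesis .
qed

lemma grid_combination_tail_ge: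
  assumes n: "0 < n" and y: "0 \<le> y" and nz: "\<exists>i<n. c i \<noteq> 0"
  shows "normal_density 0 (sqrt (\<Sum>i<n. (c i)\<^sup>2 / real n)) (y + 1)
           \<le> measure M {\<omega> \<in> space M. y < (\<Sum>i<n. c i * grid_incr n i \<omega>)}"
  using nz grid_combination_variance_pos[OF n]
  by (intro normal_upper_tail_ge[OF grid_combination_normal[OF n nz] _ y]) auto

section \<open>Rises of Brownian motion over short intervals\<close>

definition rise_event :: "real \<Rightarrow> real \<Rightarrow> real \<Rightarrow> 'a set" where
  "rise_event a h z = {\<omega>\<in>space M. \<exists>s\<in>{a..a+h}. B a \<omega> + z < B s \<omega>}"

definition dyadic_rise_event :: "real \<Rightarrow> real \<Rightarrow> real \<Rightarrow> nat \<Rightarrow> 'a set" where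
  "dyadic_rise_event a h z m = {\<omega>\<in>space M. \<exists>j\<le>(2::nat)^m. B a \<omega> + z < B (a + h * real j / 2^m) \<omega>}"

text \<open>The level-l increments have standard deviation (h/2^l)^(1/2) and are given the budget
  (z/8)(7/8)^l; the Gaussian bound exp(-(z^2/(128 h))(49/32)^l) then decays geometrically in l.\<close>

lemma dyadic_increment_prob_le:
  assumes a: "0 \<le> a" and h: "0 < h" and z: "0 < z" and K: "2 * ln 4 \<le> z\<^sup>2 / (128 * h)"
  shows "measure M {\<omega>\<in>space M. z / 8 * (7/8)^l
             < \<bar>B (a + h * real (Suc j) / 2^l) \<omega> - B (a + h * real j / 2^l) \<omega>\<bar>}
           \<le> 2 * exp (- (z\<^sup>2 / (128 * h))) * (1/4)^l"
proof -
  define K where "K = z\<^sup>2 / (128 * h)"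
  define w where "w = z / 8 * (7/8::real)^l"
  have "(a + h * real (Suc j) / 2^l) - (a + h * real j / 2^l) = h / 2^l" by (simp add: field_simps)
  then have normal: "distributed M lborel
      (\<lambda>\<omega>. B (a + h * real (Suc j) / 2^l) \<omega> - B (a + h * real j / 2^l) \<omega>)
      (\<lambda>x. ennreal (normal_density 0 (sqrt (h / 2^l)) x))"
    using B_increment_normal[of "a + h * real j / 2^l" "a + h * real (Suc j) / 2^l"] a h
    by (simp add: field_simps)
  have "w\<^sup>2 = z\<^sup>2 / 64 * (49/64)^l"
    unfolding w_def by (simp add: power_mult_distrib power2_eq_square flip: power_mult_distrib)
  moreover have "(sqrt (h / 2^l))\<^sup>2 = h / 2^l" using h by simp
  ultimately have "w\<^sup>2 / (2 * (sqrt (h / 2^l))\<^sup>2) = K * ((49/64)^l * 2^l)"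
    using h unfolding K_def by (simp add: field_simps)
  also have "(49/64::real)^l * 2^l = (1 + 17/32)^l" by (simp flip: power_mult_distrib)
  finally have w_exponent: "w\<^sup>2 / (2 * (sqrt (h / 2^l))\<^sup>2) = K * (1 + 17/32)^l" .
  have "1 + real l / 2 \<le> (1 + 17/32::real)^l"
    using Bernoulli_inequality[of "17/32::real" l] by simp
  then have exponent: "K * (1 + real l / 2) \<le> w\<^sup>2 / (2 * (sqrt (h / 2^l))\<^sup>2)"
    unfolding w_exponent using h by (intro mult_left_mono) (auto simp: K_def)
  have "exp (- K / 2) \<le> exp (- ln 4)" using K unfolding K_def by simp
  then have K4: "exp (- K / 2) \<le> 1/4" by (simp add: exp_minus)
  have "measure M {\<omega>\<in>space M. w < \<bar>B (a + h * real (Suc j) / 2^l) \<omega> - B (a + h * real j / 2^l) \<omega>\<bar>}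
      \<le> 2 * exp (- w\<^sup>2 / (2 * (sqrt (h / 2^l))\<^sup>2))"
    using h z unfolding w_def by (intro normal_abs_tail_le[OF normal]) auto
  also have "\<dots> \<le> 2 * exp (- (K * (1 + real l / 2)))" using exponent by simp
  also have "exp (- (K * (1 + real l / 2))) = exp (- K) * exp (- K / 2) ^ l"
    by (simp add: algebra_simps exp_add[symmetric] exp_of_nat_mult[symmetric])
  also have "\<dots> \<le> exp (- K) * (1/4)^l" using K4 by (intro mult_left_mono power_mono) auto
  finally show ?thesis unfolding w_def K_def by simp
qed

text \<open>The increment budgets of all levels add up to less than z, so by chaining a dyadic rise
  by z forces one increment to exceed its budget.\<close>

lemma dyadic_rise_prob_le:
  assumes a: "0 \<le> a" and h: "0 < h" and z: "0 < z" and K: "2 * ln 4 \<le> z\<^sup>2 / (128 * h)"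
  shows "measure M (dyadic_rise_event a h z m) \<le> 4 * exp (- (z\<^sup>2 / (128 * h)))"
proof -
  define w where "w l = z / 8 * (7/8::real)^l" for l
  define F where "F l j = {\<omega>\<in>space M.
      w l < \<bar>B (a + h * real (Suc j) / 2^l) \<omega> - B (a + h * real j / 2^l) \<omega>\<bar>}" for l j :: nat
  have w0: "0 \<le> w l" for l using z unfolding w_def by simp
  have F_sets: "F l j \<in> sets M" for l j
  proof -
    have "(\<lambda>\<omega>. \<bar>B (a + h * real (Suc j) / 2^l) \<omega> - B (a + h * real j / 2^l) \<omega>\<bar>) \<in> borel_measurable M"
      using a h by (intro borel_measurable_abs borel_measurable_diff B_measurable) auto
    then show ?thesis unfolding F_def by (simp add: borel_measurable_iff_greater)
  qed
  have cover: "dyadic_rise_event a h z m \<subseteq> (\<Union>l\<le>m. \<Union>j<2^l. F l j)"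
  proof (rule subsetI, rule ccontr)
    fix \<omega> assume "\<omega> \<in> dyadic_rise_event a h z m" and notin: "\<omega> \<notin> (\<Union>l\<le>m. \<Union>j<2^l. F l j)"
    then obtain j where j: "j \<le> 2^m" "B a \<omega> + z < B (a + h * real j / 2^m) \<omega>"
      and \<omega>: "\<omega> \<in> space M" unfolding dyadic_rise_event_def by auto
    have "(\<lambda>s. B s \<omega>) (a + h * real j / 2^m) - (\<lambda>s. B s \<omega>) a \<le> (\<Sum>l\<le>m. w l)"
      using notin \<omega> by (intro dyadic_chaining_le[OF _ w0 j(1)]) (force simp: F_def)
    also have "\<dots> = z / 8 * (\<Sum>l\<le>m. (7/8::real)^l)" unfolding w_def by (simp add: sum_distrib_left)
    also have "\<dots> < z / 8 * 8" using z geometric_sum_less[of "7/8::real" "{..m}"] by simp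
    finally show False using j(2) by simp
  qed
  have "measure M (dyadic_rise_event a h z m) \<le> measure M (\<Union>l\<le>m. \<Union>j<2^l. F l j)"
    by (rule finite_measure_mono[OF cover]) (use F_sets in auto)
  also have "\<dots> \<le> (\<Sum>l\<le>m. measure M (\<Union>j<2^l. F l j))"
    by (rule measure_UNION_le) (use F_sets in auto)
  also have "\<dots> \<le> (\<Sum>l\<le>m. \<Sum>j<(2::nat)^l. measure M (F l j))"
    by (intro sum_mono measure_UNION_le) (use F_sets in auto)
  also have "\<dots> \<le> (\<Sum>l\<le>m. \<Sum>j<(2::nat)^l. 2 * exp (- (z\<^sup>2 / (128 * h))) * (1/4)^l)"
    unfolding F_def w_def by (intro sum_mono dyadic_increment_prob_le[OF a h z K])
  also have "\<dots> = 2 * exp (- (z\<^sup>2 / (128 * h))) * (\<Sum>l\<le>m. (1/2)^l)"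
  proof -
    have "(\<Sum>j<(2::nat)^l. 2 * exp (- (z\<^sup>2 / (128 * h))) * (1/4::real)^l)
        = 2 * exp (- (z\<^sup>2 / (128 * h))) * (1/2)^l" for l
      by (simp flip: power_mult_distrib)
    then show ?thesis by (simp only: sum_distrib_left)
  qed
  also have "\<dots> \<le> 2 * exp (- (z\<^sup>2 / (128 * h))) * 2"
    using geometric_sum_less[of "1/2::real" "{..m}"] by (intro mult_left_mono) auto
  finally show ?thesis by simp
qed

lemma dyadic_rise_event_sets: "0 \<le> a \<Longrightarrow> 0 \<le> h \<Longrightarrow> dyadic_rise_event a h z m \<in> sets M"
proof -
  assume "0 \<le> a" "0 \<le> h"
  then have "(\<lambda>\<omega>. B (a + h * real j / 2^m) \<omega> - B a \<omega>) \<in> borel_measurable M" for j :: nat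
    by (intro borel_measurable_diff B_measurable) auto
  then have "{\<omega>\<in>space M. z < B (a + h * real j / 2^m) \<omega> - B a \<omega>} \<in> sets M" for j :: nat
    unfolding borel_measurable_iff_greater by blast
  moreover have "dyadic_rise_event a h z m
      = (\<Union>j\<in>{..(2::nat)^m}. {\<omega>\<in>space M. z < B (a + h * real j / 2^m) \<omega> - B a \<omega>})"
    unfolding dyadic_rise_event_def by auto
  ultimately show ?thesis by auto
qed

lemma incseq_dyadic_rise_event: "incseq (dyadic_rise_event a h z)"
proof (rule incseq_SucI, rule subsetI)
  fix m \<omega> assume "\<omega> \<in> dyadic_rise_event a h z m"
  then obtain j where "\<omega> \<in> space M" "j \<le> 2^m" "B a \<omega> + z < B (a + h * real j / 2^m) \<omega>"
    unfolding dyadic_rise_event_def by auto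
  moreover have "a + h * real (2 * j) / 2^(Suc m) = a + h * real j / 2^m" by (simp add: field_simps)
  ultimately show "\<omega> \<in> dyadic_rise_event a h z (Suc m)"
    unfolding dyadic_rise_event_def by (intro CollectI conjI exI[of _ "2 * j"]) auto
qed

lemma rise_event_eq_Union_dyadic:
  assumes a: "0 \<le> a" and h: "0 < h"
  shows "rise_event a h z = (\<Union>m. dyadic_rise_event a h z m)"
proof safe
  fix \<omega> assume "\<omega> \<in> rise_event a h z"
  then obtain s where \<omega>: "\<omega> \<in> space M" and s: "s \<in> {a..a+h}" and zs: "z < B s \<omega> - B a \<omega>"
    unfolding rise_event_def by auto
  have "continuous_on {a..a+h} (\<lambda>s. B s \<omega> - B a \<omega>)"
    by (intro continuous_intros B_continuous_on[OF \<omega> a])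
  from continuous_on_dyadic_point_gt[OF this h s zs]
  show "\<omega> \<in> (\<Union>m. dyadic_rise_event a h z m)"
    unfolding dyadic_rise_event_def using \<omega> by (auto simp: algebra_simps)
next
  fix \<omega> m assume \<omega>: "\<omega> \<in> dyadic_rise_event a h z m"
  have "a + h * real j / 2^m \<in> {a..a+h}" if "j \<le> 2^m" for j
  proof -
    have "h * (real j / 2^m) \<le> h * 1" using that h by (intro mult_left_mono) (auto simp: field_simps)
    then show ?thesis using h by auto
  qed
  then show "\<omega> \<in> rise_event a h z"
    using \<omega> unfolding dyadic_rise_event_def rise_event_def by blast
qed

lemma rise_event_sets:
  assumes "0 \<le> a" and "0 < h"
  shows "rise_event a h z \<in> sets M"
proof -
  have "dyadic_rise_event a h z m \<in> sets M" for m using assms by (intro dyadic_rise_event_sets) auto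
  then show ?thesis unfolding rise_event_eq_Union_dyadic[OF assms] by auto
qed

lemma rise_event_prob_le:
  assumes a: "0 \<le> a" and h: "0 < h" and z: "0 < z" and K: "2 * ln 4 \<le> z\<^sup>2 / (128 * h)"
  shows "measure M (rise_event a h z) \<le> 4 * exp (- (z\<^sup>2 / (128 * h)))"
proof -
  have "(\<lambda>m. measure M (dyadic_rise_event a h z m)) \<longlonglongrightarrow> measure M (rise_event a h z)"
    unfolding rise_event_eq_Union_dyadic[OF a h] using a h
    by (intro finite_Lim_measure_incseq incseq_dyadic_rise_event) (auto intro: dyadic_rise_event_sets)
  then show ?thesis by (rule LIMSEQ_le_const2) (use dyadic_rise_prob_le[OF a h z K] in auto)
qed

section \<open>Tail bounds for the area\<close>

lemma grid_Riemann_sum_eq: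
  assumes \<omega>: "\<omega> \<in> space M" and \<tau>: "\<And>k. k < n \<Longrightarrow> \<tau> k \<le> k"
  shows "(\<Sum>k<n. B (real (\<tau> k) / real n) \<omega>) / real n = (\<Sum>i<n. grid_weight n \<tau> i * grid_incr n i \<omega>)"
proof -
  have "(\<Sum>k<n. B (real (\<tau> k) / real n) \<omega>)
      = (\<Sum>k<n. \<Sum>i<n. if i < \<tau> k then grid_incr n i \<omega> else 0)"
  proof (rule sum.cong[OF refl])
    fix k assume k: "k \<in> {..<n}"
    have "B (real (\<tau> k) / real n) \<omega> = (\<Sum>i<\<tau> k. grid_incr n i \<omega>)" by (rule B_grid_eq_sum[OF \<omega>])
    also have "{..<\<tau> k} = {i \<in> {..<n}. i < \<tau> k}" using \<tau>[of k] k by auto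
    also have "(\<Sum>i\<in>{i \<in> {..<n}. i < \<tau> k}. grid_incr n i \<omega>)
        = (\<Sum>i<n. if i < \<tau> k then grid_incr n i \<omega> else 0)"
      by (rule sum.inter_filter) simp
    finally show "B (real (\<tau> k) / real n) \<omega> = (\<Sum>i<n. if i < \<tau> k then grid_incr n i \<omega> else 0)" .
  qed
  also have "\<dots> = (\<Sum>i<n. \<Sum>k<n. if i < \<tau> k then grid_incr n i \<omega> else 0)" by (rule sum.swap)
  also have "\<dots> = (\<Sum>i<n. real (card {k \<in> {..<n}. i < \<tau> k}) * grid_incr n i \<omega>)"
  proof (rule sum.cong[OF refl])
    fix i
    have "(\<Sum>k<n. if i < \<tau> k then grid_incr n i \<omega> else 0) = (\<Sum>k\<in>{k \<in> {..<n}. i < \<tau> k}. grid_incr n i \<omega>)"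
      by (rule sum.inter_filter[symmetric]) simp
    then show "(\<Sum>k<n. if i < \<tau> k then grid_incr n i \<omega> else 0)
        = real (card {k \<in> {..<n}. i < \<tau> k}) * grid_incr n i \<omega>" by simp
  qed
  finally show ?thesis unfolding grid_weight_def by (simp add: sum_divide_distrib)
qed

lemma running_max_grid_le:
  assumes \<omega>: "\<omega> \<in> space M" and k: "k < n"
    and no_rise: "\<And>i. i < n \<Longrightarrow> \<omega> \<notin> rise_event (real i / real n) (1 / real n) z"
  shows "running_max B (real (Suc k) / real n) \<omega> \<le> Max ((\<lambda>i. B (real i / real n) \<omega>) ` {..k}) + z"
proof (rule running_max_le)
  fix s assume s0: "0 \<le> s" and s1: "s \<le> real (Suc k) / real n"
  define i where "i = min k (nat \<lfloor>s * real n\<rfloor>)"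
  have n: "0 < n" using k by simp
  have floor: "real (nat \<lfloor>s * real n\<rfloor>) \<le> s * real n" "s * real n < real (nat \<lfloor>s * real n\<rfloor>) + 1"
    using s0 n by (simp, linarith)
  have "s * real n \<le> real (Suc k)" using s1 n by (simp add: field_simps)
  then have "real i \<le> s * real n \<and> s * real n \<le> real i + 1"
    using floor unfolding i_def by (cases "k \<le> nat \<lfloor>s * real n\<rfloor>") (auto simp: min_def)
  then have "s \<in> {real i / real n..real i / real n + 1 / real n}"
    using n by (auto simp: field_simps)
  moreover have "\<omega> \<notin> rise_event (real i / real n) (1 / real n) z"
    using k by (intro no_rise) (simp add: i_def)
  ultimately have "\<not> B (real i / real n) \<omega> + z < B s \<omega>"
    using \<omega> unfolding rise_event_def by blast
  then have "B s \<omega> \<le> B (real i / real n) \<omega> + z" by simp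
  also have "B (real i / real n) \<omega> \<le> Max ((\<lambda>i. B (real i / real n) \<omega>) ` {..k})"
    unfolding i_def by (intro Max_ge) auto
  finally show "B s \<omega> \<le> Max ((\<lambda>i. B (real i / real n) \<omega>) ` {..k}) + z" by simp
qed simp

lemma max_area_tail_ge:
  assumes n: "2 \<le> n" and x: "0 \<le> x"
  shows "normal_density 0 (sqrt ((\<Sum>m<n. real m ^ 2) / real n ^ 3)) (x + 1)
           \<le> measure M {\<omega>\<in>space M. x < max_area B \<omega>}"
proof -
  have n0: "0 < n" using n by simp
  have "card {k \<in> {..<n}. 0 < k} = n - 1" using card_lessThan_greater[of n 0] by simp
  then have "grid_weight n id 0 \<noteq> 0" unfolding grid_weight_def using n by simp
  then have "\<exists>i<n. grid_weight n id i \<noteq> 0" using n0 by blast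
  from grid_combination_tail_ge[OF n0 x this]
  have "normal_density 0 (sqrt ((\<Sum>m<n. real m ^ 2) / real n ^ 3)) (x + 1)
      \<le> measure M {\<omega>\<in>space M. x < (\<Sum>i<n. grid_weight n id i * grid_incr n i \<omega>)}"
    unfolding grid_weight_id_variance .
  also have "\<dots> \<le> measure M {\<omega>\<in>space M. x < max_area B \<omega>}"
  proof (rule finite_measure_mono)
    show "{\<omega>\<in>space M. x < max_area B \<omega>} \<in> sets M"
      using max_area_measurable unfolding borel_measurable_iff_greater by blast
    show "{\<omega>\<in>space M. x < (\<Sum>i<n. grid_weight n id i * grid_incr n i \<omega>)}
        \<subseteq> {\<omega>\<in>space M. x < max_area B \<omega>}"
    proof safe
      fix \<omega> assume \<omega>: "\<omega> \<in> space M" and lt: "x < (\<Sum>i<n. grid_weight n id i * grid_incr n i \<omega>)"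
      have "(\<Sum>i<n. grid_weight n id i * grid_incr n i \<omega>) = (\<Sum>k<n. B (real k / real n) \<omega>) / real n"
        using grid_Riemann_sum_eq[OF \<omega>, of n id] by simp
      also have "\<dots> \<le> (\<Sum>k<n. running_max B (real k / real n) \<omega>) / real n"
        using n0 by (intro divide_right_mono sum_mono running_max_ge[OF \<omega>]) auto
      also have "\<dots> \<le> max_area B \<omega>" by (rule max_area_Riemann_bounds(1)[OF \<omega> n0])
      finally show "x < max_area B \<omega>" using lt by simp
    qed
  qed
  finally show ?thesis .
qed

lemma grid_Riemann_sum_tail_le:
  assumes n: "0 < n" and y: "0 \<le> y" and \<tau>: "\<And>k. k < n \<Longrightarrow> \<tau> k \<le> k"
  shows "measure M {\<omega>\<in>space M. y < (\<Sum>i<n. grid_weight n \<tau> i * grid_incr n i \<omega>)}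
           \<le> exp (- 3/2 * y\<^sup>2)"
proof -
  have "measure M {\<omega>\<in>space M. y < (\<Sum>i<n. grid_weight n \<tau> i * grid_incr n i \<omega>)}
      \<le> exp (- y\<^sup>2 / (2 * (1/3)))"
    by (intro grid_combination_tail_le[OF n y] grid_weight_variance_le[OF n \<tau>])
  moreover have "- y\<^sup>2 / (2 * (1/3)) = - 3/2 * y\<^sup>2" by simp
  ultimately show ?thesis by metis
qed

text \<open>Off the rise events S((k+1)/n) \<le> B(\<tau>(k)/n) + z, where \<tau>(k) \<le> k is a grid point at which
  B attains its maximum over the first k+1 grid points.\<close>

lemma max_area_le_grid_Riemann_sum:
  assumes \<omega>: "\<omega> \<in> space M" and n: "0 < n"
    and no_rise: "\<And>i. i < n \<Longrightarrow> \<omega> \<notin> rise_event (real i / real n) (1 / real n) z"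
  shows "\<exists>\<tau>\<in>Pi\<^sub>E {..<n} (\<lambda>k. {..k}).
           max_area B \<omega> \<le> (\<Sum>i<n. grid_weight n \<tau> i * grid_incr n i \<omega>) + z"
proof -
  define Mx where "Mx k = Max ((\<lambda>i. B (real i / real n) \<omega>) ` {..k})" for k
  have "\<exists>i\<le>k. B (real i / real n) \<omega> = Mx k" for k
  proof -
    have "Mx k \<in> (\<lambda>i. B (real i / real n) \<omega>) ` {..k}" unfolding Mx_def by (intro Max_in) auto
    then show ?thesis by auto
  qed
  then obtain \<sigma> where \<sigma>: "\<And>k. \<sigma> k \<le> k" "\<And>k. B (real (\<sigma> k) / real n) \<omega> = Mx k" by metis
  define \<tau> where "\<tau> = restrict \<sigma> {..<n}"
  have \<tau>: "\<tau> \<in> Pi\<^sub>E {..<n} (\<lambda>k. {..k})" "\<And>k. k < n \<Longrightarrow> \<tau> k \<le> k"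
    unfolding \<tau>_def using \<sigma>(1) by auto
  have step: "running_max B (real (Suc k) / real n) \<omega> \<le> B (real (\<tau> k) / real n) \<omega> + z"
    if "k < n" for k
    using running_max_grid_le[OF \<omega> that no_rise] \<sigma>(2)[of k] that by (simp add: \<tau>_def Mx_def)
  have "max_area B \<omega> \<le> (\<Sum>k<n. running_max B (real (Suc k) / real n) \<omega>) / real n"
    by (rule max_area_Riemann_bounds(2)[OF \<omega> n])
  also have "\<dots> \<le> (\<Sum>k<n. B (real (\<tau> k) / real n) \<omega> + z) / real n"
    using n step by (intro divide_right_mono sum_mono) auto
  also have "\<dots> = (\<Sum>k<n. B (real (\<tau> k) / real n) \<omega>) / real n + z"
    using n by (simp add: sum.distrib add_divide_distrib)
  also have "(\<Sum>k<n. B (real (\<tau> k) / real n) \<omega>) / real n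
      = (\<Sum>i<n. grid_weight n \<tau> i * grid_incr n i \<omega>)"
    by (rule grid_Riemann_sum_eq[OF \<omega> \<tau>(2)])
  finally show ?thesis using \<tau>(1) by blast
qed

lemma max_area_tail_le:
  assumes n: "0 < n" and y: "0 \<le> y" and z: "0 < z" and K: "2 * ln 4 \<le> real n * z\<^sup>2 / 128"
  shows "measure M {\<omega>\<in>space M. y + z < max_area B \<omega>}
           \<le> real (card (Pi\<^sub>E {..<n} (\<lambda>k. {..k}))) * exp (- 3/2 * y\<^sup>2)
             + real n * (4 * exp (- (real n * z\<^sup>2 / 128)))"
proof -
  define T where "T = Pi\<^sub>E {..<n} (\<lambda>k. {..k::nat})"
  define G where "G \<tau> = {\<omega>\<in>space M. y < (\<Sum>i<n. grid_weight n \<tau> i * grid_incr n i \<omega>)}" for \<tau>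
  define R where "R i = rise_event (real i / real n) (1 / real n) z" for i
  have T: "finite T" "\<And>\<tau> k. \<tau> \<in> T \<Longrightarrow> k < n \<Longrightarrow> \<tau> k \<le> k"
    unfolding T_def by (auto intro: finite_PiE)
  have G_sets: "G \<tau> \<in> sets M" for \<tau>
  proof -
    have "(\<lambda>\<omega>. \<Sum>i<n. grid_weight n \<tau> i * grid_incr n i \<omega>) \<in> borel_measurable M"
      by (intro borel_measurable_sum borel_measurable_times borel_measurable_const grid_incr_measurable)
    then show ?thesis unfolding G_def by (simp add: borel_measurable_iff_greater)
  qed
  have scale: "z\<^sup>2 / (128 * (1 / real n)) = real n * z\<^sup>2 / 128" by simp
  have R_sets: "R i \<in> sets M" for i unfolding R_def using n by (intro rise_event_sets) auto
  have R_prob: "measure M (R i) \<le> 4 * exp (- (real n * z\<^sup>2 / 128))" for i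
  proof -
    have "2 * ln 4 \<le> z\<^sup>2 / (128 * (1 / real n))" using K by (simp only: scale)
    then show ?thesis unfolding R_def scale[symmetric] using n z by (intro rise_event_prob_le) auto
  qed
  have cover: "{\<omega>\<in>space M. y + z < max_area B \<omega>} \<subseteq> (\<Union>\<tau>\<in>T. G \<tau>) \<union> (\<Union>i<n. R i)"
  proof (rule subsetI, rule ccontr)
    fix \<omega> assume "\<omega> \<in> {\<omega>\<in>space M. y + z < max_area B \<omega>}"
      and notin: "\<omega> \<notin> (\<Union>\<tau>\<in>T. G \<tau>) \<union> (\<Union>i<n. R i)"
    then have \<omega>: "\<omega> \<in> space M" and A: "y + z < max_area B \<omega>" by auto
    have "\<omega> \<notin> rise_event (real i / real n) (1 / real n) z" if "i < n" for i
      using notin that unfolding R_def by blast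
    from max_area_le_grid_Riemann_sum[OF \<omega> n this] obtain \<tau> where
      "\<tau> \<in> T" "max_area B \<omega> \<le> (\<Sum>i<n. grid_weight n \<tau> i * grid_incr n i \<omega>) + z"
      unfolding T_def by blast
    then show False using notin \<omega> A unfolding G_def by auto
  qed
  have "measure M {\<omega>\<in>space M. y + z < max_area B \<omega>} \<le> measure M ((\<Union>\<tau>\<in>T. G \<tau>) \<union> (\<Union>i<n. R i))"
    by (rule finite_measure_mono[OF cover]) (intro sets.Un sets.finite_UN T(1) G_sets R_sets; simp)
  also have "\<dots> \<le> measure M (\<Union>\<tau>\<in>T. G \<tau>) + measure M (\<Union>i<n. R i)"
    by (rule measure_Un_le) (use T G_sets R_sets in auto)
  also have "measure M (\<Union>\<tau>\<in>T. G \<tau>) \<le> (\<Sum>\<tau>\<in>T. measure M (G \<tau>))"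
    by (rule measure_UNION_le) (use T G_sets in auto)
  also have "\<dots> \<le> (\<Sum>\<tau>\<in>T. exp (- 3/2 * y\<^sup>2))"
    unfolding G_def using T(2) by (intro sum_mono grid_Riemann_sum_tail_le[OF n y]) auto
  also have "measure M (\<Union>i<n. R i) \<le> (\<Sum>i<n. measure M (R i))"
    by (rule measure_UNION_le) (use R_sets in auto)
  also have "\<dots> \<le> (\<Sum>i<n. 4 * exp (- (real n * z\<^sup>2 / 128)))"
    by (rule sum_mono) (rule R_prob)
  finally show ?thesis unfolding T_def by simp
qed

lemma max_area_tail_lower_rate:
  assumes \<epsilon>: "0 < \<epsilon>"
  shows "\<forall>\<^sub>F x in at_top. exp (- (3/2 + \<epsilon>) * x\<^sup>2) \<le> measure M {\<omega>\<in>space M. x < max_area B \<omega>}"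
proof -
  let ?v = "\<lambda>n. (\<Sum>m<n. real m ^ 2) / real n ^ 3"
  have "1 / (3 + \<epsilon>) < 1 / 3" using \<epsilon> by (simp add: field_simps)
  from order_tendstoD(1)[OF sum_lessThan_square_over_cube_tendsto this]
  have "\<forall>\<^sub>F n in sequentially. 2 \<le> n \<and> 1 / (3 + \<epsilon>) < ?v n"
    by (intro eventually_conj eventually_ge_at_top)
  then obtain n where n: "2 \<le> n" and v_n: "1 / (3 + \<epsilon>) < ?v n"
    unfolding eventually_sequentially by auto
  define v where "v = ?v n"
  have v: "1 / (3 + \<epsilon>) < v" using v_n unfolding v_def .
  have "0 < 1 / (3 + \<epsilon>)" using \<epsilon> by simp
  then have v0: "0 < v" using v by linarith
  have "1 < v * (3 + \<epsilon>)" using v \<epsilon> by (simp add: divide_less_eq)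
  then have "1 / v < 3 + \<epsilon>" using v0 by (simp add: divide_less_eq mult.commute)
  then have rate: "1 / (2 * v) + \<epsilon> / 2 \<le> 3/2 + \<epsilon>" using \<epsilon> by simp
  have "0 < \<epsilon> / 2" using \<epsilon> by simp
  from normal_density_ge_exp[OF v0 this] eventually_ge_at_top[of 0]
  show ?thesis
  proof eventually_elim
    case (elim x)
    have "exp (- (3/2 + \<epsilon>) * x\<^sup>2) \<le> exp (- (1 / (2 * v) + \<epsilon> / 2) * x\<^sup>2)"
      using rate by (simp add: mult_right_mono)
    also have "\<dots> \<le> normal_density 0 (sqrt v) (x + 1)" using elim \<epsilon> by simp
    also have "\<dots> \<le> measure M {\<omega>\<in>space M. x < max_area B \<omega>}"
      unfolding v_def by (rule max_area_tail_ge[OF n elim(2)])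
    finally show ?case .
  qed
qed

lemma max_area_tail_upper_rate:
  assumes \<epsilon>: "0 < \<epsilon>"
  shows "\<forall>\<^sub>F x in at_top. measure M {\<omega>\<in>space M. x < max_area B \<omega>} \<le> exp (- (3/2 - \<epsilon>) * x\<^sup>2)"
proof -
  define \<delta> where "\<delta> = min (1/2) (\<epsilon> / 6)"
  have \<delta>: "0 < \<delta>" "\<delta> < 1" "\<delta> \<le> \<epsilon> / 6" using \<epsilon> unfolding \<delta>_def by auto
  obtain n :: nat where n_big: "192 / \<delta>\<^sup>2 < real n" using reals_Archimedean2 by blast
  have "0 < 192 / \<delta>\<^sup>2" using \<delta> by simp
  then have n: "0 < n" using n_big by linarith
  have "192 < real n * \<delta>\<^sup>2" using n_big \<delta> by (simp add: pos_divide_less_eq)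
  then have rise_rate: "3/2 - \<epsilon> < real n * \<delta>\<^sup>2 / 128" using \<epsilon> by simp
  define C where "C = real (card (Pi\<^sub>E {..<n} (\<lambda>k. {..k::nat})))"
  have "1 - 2 * \<delta> \<le> (1 - \<delta>)\<^sup>2" by (simp add: power2_eq_square algebra_simps)
  then have gauss_rate: "3/2 - \<epsilon> < 3/2 * (1 - \<delta>)\<^sup>2" using \<delta> \<epsilon> by linarith
  have "0 < real n * \<delta>\<^sup>2 / 128" using n \<delta> by simp
  from eventually_le_quadratic[OF this, of 0 "2 * ln 4"]
    eventually_mult_exp_le_exp[OF gauss_rate, of "2 * C"]
    eventually_mult_exp_le_exp[OF rise_rate, of "8 * real n"]
    eventually_gt_at_top[of 0]
  show ?thesis
  proof eventually_elim
    case (elim x)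
    have "measure M {\<omega>\<in>space M. x < max_area B \<omega>}
        = measure M {\<omega>\<in>space M. (1 - \<delta>) * x + \<delta> * x < max_area B \<omega>}"
      by (simp add: algebra_simps)
    also have "\<dots> \<le> C * exp (- 3/2 * ((1 - \<delta>) * x)\<^sup>2)
        + real n * (4 * exp (- (real n * (\<delta> * x)\<^sup>2 / 128)))"
      unfolding C_def using elim \<delta> n
      by (intro max_area_tail_le) (auto simp: power_mult_distrib mult.assoc)
    also have "\<dots> = C * exp (- (3/2 * (1 - \<delta>)\<^sup>2) * x\<^sup>2)
        + real n * (4 * exp (- (real n * \<delta>\<^sup>2 / 128) * x\<^sup>2))"
      by (simp add: power_mult_distrib mult.assoc)
    also have "\<dots> \<le> exp (- (3/2 - \<epsilon>) * x\<^sup>2) / 2 + exp (- (3/2 - \<epsilon>) * x\<^sup>2) / 2"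
      using elim by simp
    finally show ?case by simp
  qed
qed

end

theorem corollary2:
  fixes M :: "'a measure" and B :: "real \<Rightarrow> 'a \<Rightarrow> real"
  assumes "std_brownian_motion M B"
  shows "\<exists>g :: real \<Rightarrow> real. g \<in> o[at_top](\<lambda>x. x ^ 2) \<and>
           (\<forall>\<^sub>F x in at_top.
              measure M {\<omega> \<in> space M. max_area B \<omega> > x} = exp (- 3 * x ^ 2 / 2 + g x))"
proof -
  interpret brownian_motion M B by unfold_locales (rule assms)
  have "\<exists>g. g \<in> o[at_top](\<lambda>x. x ^ 2) \<and> (\<forall>\<^sub>F x in at_top.
      measure M {\<omega> \<in> space M. x < max_area B \<omega>} = exp (- (3/2) * x ^ 2 + g x))"
    by (rule exp_neg_quadratic_rate) (use max_area_tail_lower_rate max_area_tail_upper_rate in auto)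
  then show ?thesis by simp
qed

end
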